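(* Let $x=(x_1,\dots,x_{|x|})$ and $y=(y_1,\dots,y_{|y|})$ be two finite sequences of strings and let $\lambda\ge 0$. Then the minimum of $\mathrm{error}_\lambda(T)$ over all labeled summary trees $T$ of $\{x,y\}$ equals $\mathsf{EDG}(x,y,\lambda)$, and the tree $T^\ast=\textsc{BuildBifurcation}(x,y,\lambda)$ is an optimal summary tree for $\{x,y\}$ with node cost $\lambda$, with $\mathrm{error}_\lambda(T^\ast)=\mathsf{EDG}(x,y,\lambda)$.
   Context: Strings are over a finite alphabet; $\varepsilon$ is the empty string and $\mathsf{ED}$ is the classical Levenshtein edit distance between strings (unit cost for character insertion, deletion and substitution). A string sequence is a finite list of strings. Asymmetric edit distance: for string sequences $x,y$, $\mathsf{AED}(x,y)$ is the minimum cost of transforming $x$ into $y$ using only the operations (i) inserting a string $w$ into $x$, costing $\mathsf{ED}(w,\varepsilon)$, and (ii) substituting a string $w$ of $x$ by $w'$, costing $\mathsf{ED}(w,w')$; no string of $x$ may be deleted (so $\mathsf{AED}(x,y)$ is defined only when $|x|\le|y|$). Labeled summary tree of a set $X$ of string sequences: a rooted tree $T$ whose root is a special sentinel node and whose other nodes are each labeled by a string, together with a map $f$ assigning to each $x\in X$ a node $v_x$ of $T$. $L_T(v)$ denotes the sequence of labels on the path from the root (excluding the sentinel) to $v$; $|T|$ is the number of non-sentinel nodes. For $\lambda\ge0$, $\mathrm{error}_\lambda(T)=\sum_{x\in X}\mathsf{AED}(x,L_T(v_x))+\lambda|T|$, where the tree must satisfy $|x|\le|L_T(v_x)|$ for every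 $x$ (so that each $\mathsf{AED}$ is defined). An optimal summary tree minimizes $\mathrm{error}_\lambda$. Edit distance with give-up: for sequences $x,y$ (1-indexed), define $\mathsf{EDG}(i,j,\lambda)$ for $1\le i\le|x|+1$, $1\le j\le|y|+1$ by $\mathsf{EDG}(|x|+1,|y|+1,\lambda)=0$, $\mathsf{EDG}(i,|y|+1,\lambda)=\lambda(|x|-i+1)$, $\mathsf{EDG}(|x|+1,j,\lambda)=\lambda(|y|-j+1)$, and otherwise $\mathsf{EDG}(i,j,\lambda)$ is the minimum of: $\mathsf{EDG}(i+1,j+1,\lambda)+\lambda+\mathsf{ED}(x_i,y_j)$ (substitution); $\mathsf{EDG}(i,j+1,\lambda)+\lambda+\mathsf{ED}(\varepsilon,y_j)$ (insertion); $\mathsf{EDG}(i+1,j,\lambda)+\lambda+\mathsf{ED}(x_i,\varepsilon)$ (deletion); $\lambda(|x|-i+1)+\lambda(|y|-j+1)$ (give up). Set $\mathsf{EDG}(x,y,\lambda)=\mathsf{EDG}(1,1,\lambda)$. $\textsc{BuildBifurcation}(x,y,\lambda)$ is the tree built recursively along an optimal choice in this recurrence: if both sequences are empty, the empty tree (just the sentinel); if the chosen option is insertion of $y_1$ (or $x$ is empty), a root-child node labeled $y_1$ with subtree $\textsc{BuildBifurcation}(x,y_{2..|y|},\lambda)$ below it; if deletion of $x_1$ (or $y$ is empty), a node labeled $x_1$ with subtree $\textsc{BuildBifurcation}(x_{2..|x|},y,\lambda)$; if substitution, a node labeled $x_1$ with subtree $\textsc{BuildBifurcation}(x_{2..|x|},y_{2..|y|},\lambda)$;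 if give up, two disjoint paths below the current root, labeled successively by the remaining strings of $x$ and of $y$ respectively. Whenever the node corresponding to the last string $x_{|x|}$ (resp. $y_{|y|}$) is placed, $x$ (resp. $y$) is mapped to that node. *)

theory Defs
  imports Main "HOL.Real"
begin

fun ed :: "'a list \<Rightarrow> 'a list \<Rightarrow> nat" where
  "ed [] ys = length ys"
| "ed xs [] = length xs"
| "ed (a # xs) (b # ys) =
     min (min (ed xs ys + (if a = b then 0 else 1)) (ed xs (b # ys) + 1)) (ed (a # xs) ys + 1)"

inductive aed_reach :: "'a list list \<Rightarrow> 'a list list \<Rightarrow> nat \<Rightarrow> bool" where
  refl: "aed_reach x x 0"
| ins: "aed_reach x z c \<Longrightarrow> i \<le> length z \<Longrightarrow>
          aed_reach x (take i z @ w # drop i z) (c + ed w [])"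
| subst: "aed_reach x z c \<Longrightarrow> i < length z \<Longrightarrow>
          aed_reach x (z[i := w]) (c + ed (z ! i) w)"

definition aed :: "'a list list \<Rightarrow> 'a list list \<Rightarrow> nat" where
  "aed x y = (LEAST c. aed_reach x y c)"

text \<open>A tree is encoded by a list ns of its non-sentinel nodes: node number k+1 (k < length ns)
  has parent fst (ns ! k) and label snd (ns ! k); node 0 is the sentinel root. Validity requires
  every node's parent to have a smaller number, which makes it a rooted tree at the sentinel;
  every finite rooted tree admits such a numbering.\<close>

definition valid_tree :: "(nat \<times> 'a list) list \<Rightarrow> bool" where
  "valid_tree ns \<longleftrightarrow> (\<forall>k < length ns. fst (ns ! k) \<le> k)"

text \<open>tree_path ns v = L_T(v): labels on the path from the root (sentinel excluded) to v.\<close>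

function tree_path :: "(nat \<times> 'a list) list \<Rightarrow> nat \<Rightarrow> 'a list list" where
  "tree_path ns v =
     (if v = 0 \<or> length ns < v \<or> v \<le> fst (ns ! (v - 1)) then []
      else tree_path ns (fst (ns ! (v - 1))) @ [snd (ns ! (v - 1))])"
  by pat_completeness auto
termination by (relation "measure (\<lambda>(ns, v). v)") auto

text \<open>A labeled summary tree of {x, y}: a valid tree together with the assigned nodes vx, vy
  (nodes of T, the sentinel 0 included), such that the AED terms are defined.\<close>

definition summary_tree ::
  "'a list list \<Rightarrow> 'a list list \<Rightarrow> (nat \<times> 'a list) list \<Rightarrow> nat \<Rightarrow> nat \<Rightarrow> bool" where
  "summary_tree x y ns vx vy \<longleftrightarrow>
     valid_tree ns \<and> vx \<le> length ns \<and> vy \<le> length ns \<and>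
     length x \<le> length (tree_path ns vx) \<and> length y \<le> length (tree_path ns vy)"

definition error ::
  "real \<Rightarrow> 'a list list \<Rightarrow> 'a list list \<Rightarrow> (nat \<times> 'a list) list \<Rightarrow> nat \<Rightarrow> nat \<Rightarrow> real" where
  "error lam x y ns vx vy =
     real (aed x (tree_path ns vx)) + real (aed y (tree_path ns vy)) + lam * real (length ns)"

text \<open>edg lam xs ys = EDG(i, j, lam) where xs, ys are the suffixes x_{i..}, y_{j..}.\<close>

fun edg :: "real \<Rightarrow> 'a list list \<Rightarrow> 'a list list \<Rightarrow> real" where
  "edg lam [] [] = 0"
| "edg lam xs [] = lam * real (length xs)"
| "edg lam [] ys = lam * real (length ys)"
| "edg lam (a # xs) (b # ys) =
     min (min (edg lam xs ys + lam + real (ed a b))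
              (edg lam (a # xs) ys + lam + real (ed [] b)))
         (min (edg lam xs (b # ys) + lam + real (ed a []))
              (lam * real (length (a # xs)) + lam * real (length (b # ys))))"

text \<open>Placing a new node labeled s below the current root, with a subtree ns below it:
  all node numbers of the subtree are shifted by one (its sentinel becomes the new node 1).\<close>

definition shift_under :: "'a list \<Rightarrow> (nat \<times> 'a list) list \<Rightarrow> (nat \<times> 'a list) list" where
  "shift_under s ns = (0, s) # map (\<lambda>(p, l). (p + 1, l)) ns"

text \<open>A path below the node with number r, labeled successively by the strings of ws,
  occupying node numbers off+1, ..., off+length ws.\<close>

definition chain :: "nat \<Rightarrow> nat \<Rightarrow> 'a list list \<Rightarrow> (nat \<times> 'a list) list" where
  "chain r off ws = map (\<lambda>i. (if i = 0 then r else off + i, ws ! i)) [0..<length ws]"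

text \<open>bb lam xs ys ns vx vy: (ns, vx, vy) is a possible output of BuildBifurcation(xs, ys, lam)
  for SOME optimal choice at each step of the recurrence (ties broken arbitrarily). vx (vy) is the
  node to which xs (ys) is mapped; if xs is empty at the current call, it was mapped to the
  current root, i.e. node 0 of the current subtree.\<close>

inductive bb :: "real \<Rightarrow> 'a list list \<Rightarrow> 'a list list \<Rightarrow> (nat \<times> 'a list) list \<Rightarrow> nat \<Rightarrow> nat \<Rightarrow> bool"
  for lam :: real where
  empty: "bb lam [] [] [] 0 0"
| insertion: "bb lam xs ys ns vx vy \<Longrightarrow>
     (xs = [] \<or> (xs \<noteq> [] \<and> edg lam xs (b # ys) = edg lam xs ys + lam + real (ed [] b))) \<Longrightarrow>
     bb lam xs (b # ys) (shift_under b ns) (if xs = [] then 0 else vx + 1) (vy + 1)"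
| deletion: "bb lam xs ys ns vx vy \<Longrightarrow>
     (ys = [] \<or> (ys \<noteq> [] \<and> edg lam (a # xs) ys = edg lam xs ys + lam + real (ed a []))) \<Longrightarrow>
     bb lam (a # xs) ys (shift_under a ns) (vx + 1) (if ys = [] then 0 else vy + 1)"
| substitution: "bb lam xs ys ns vx vy \<Longrightarrow>
     edg lam (a # xs) (b # ys) = edg lam xs ys + lam + real (ed a b) \<Longrightarrow>
     bb lam (a # xs) (b # ys) (shift_under a ns) (vx + 1) (vy + 1)"
| giveup: "xs \<noteq> [] \<Longrightarrow> ys \<noteq> [] \<Longrightarrow>
     edg lam xs ys = lam * real (length xs) + lam * real (length ys) \<Longrightarrow>
     bb lam xs ys (chain 0 0 xs @ chain 0 (length xs) ys) (length xs) (length xs + length ys)"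

end

theory Submission
  imports Defs "HOL-Library.Sublist"
begin

(* Lower bound: in any summary tree the root paths of v_x and v_y have the form C @ P and
   C @ Q with |C| + |P| + |Q| <= |T|.  Fix optimal deletion-free alignments of x into C @ P and
   of y into C @ Q.  Walking down C, each node is inserted or matched by each alignment, and
   this pair of choices is an insertion, deletion or substitution step of the EDG recurrence
   costing lambda plus at most what the alignments pay at that node (by the triangle
   inequality for ED); below C the recurrence gives up at cost lambda (|P| + |Q|).
   Upper bound: BuildBifurcation realizes each step of the recurrence at exactly its cost. *)

section \<open>Edit distance\<close>

lemma ed_Nil2 [simp]: "ed xs [] = length xs"
  by (cases xs) auto

lemma ed_self [simp]: "ed xs xs = 0"
  by (induction xs) auto

lemma ed_commute: "ed xs ys = ed ys xs"
  by (induction xs ys rule: ed.induct) (auto simp: min_def)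

lemma length_le_ed_add_length: "length xs \<le> ed xs ys + length ys"
  by (induction xs ys rule: ed.induct) (auto simp: min_def)

lemma ed_le_length_add_length: "ed xs ys \<le> length xs + length ys"
  by (induction xs ys rule: ed.induct) (auto simp: min_def)

lemma ed_triangle: "ed a c \<le> ed a b + ed b c"
proof (induction "length a + length b + length c" arbitrary: a b c rule: less_induct)
  case less
  show ?case
  proof (cases "a = [] \<or> b = [] \<or> c = []")
    case True
    moreover have ?thesis if "a = []"
      using that length_le_ed_add_length[of c b] ed_commute[of c b] by simp
    moreover have ?thesis if "b = []"
      using that ed_le_length_add_length[of a c] by simp
    moreover have ?thesis if "c = []"
      using that length_le_ed_add_length[of a b] by simp
    ultimately show ?thesis
      by blast
  next
    case False
    then obtain a1 a' b1 b' c1 c' where eqs: "a = a1 # a'" "b = b1 # b'" "c = c1 # c'"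
      by (meson list.exhaust)
    have IH: "ed a' c' \<le> ed a' b' + ed b' c'" "ed a' c \<le> ed a' b + ed b c"
      "ed a c' \<le> ed a b + ed b c'" "ed a c' \<le> ed a b' + ed b' c'"
      "ed a c \<le> ed a b' + ed b' c" "ed a' c \<le> ed a' b' + ed b' c"
      by (rule less; simp add: eqs)+
    define d where "d = (\<lambda>x y::'a. if x = y then 0 else (1::nat))"
    have "d a1 c1 \<le> d a1 b1 + d b1 c1"
      by (auto simp: d_def)
    moreover have "ed a c \<le> ed a' c' + d a1 c1" "ed a c \<le> ed a' c + 1" "ed a c \<le> ed a c' + 1"
      unfolding eqs d_def by auto
    moreover have "ed a b = ed a' b' + d a1 b1 \<or> ed a b = ed a' b + 1 \<or> ed a b = ed a b' + 1"
      unfolding eqs d_def by (simp add: min_def)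
    moreover have "ed b c = ed b' c' + d b1 c1 \<or> ed b c = ed b' c + 1 \<or> ed b c = ed b c' + 1"
      unfolding eqs d_def by (simp add: min_def)
    ultimately show ?thesis
      using IH by (elim disjE) linarith+
  qed
qed

section \<open>Alignments and the asymmetric edit distance\<close>

text \<open>Alignments are the normal forms of aed_reach derivations: a substitution applied to an
  inserted string merges into the insertion, and successive substitutions of one string merge by
  the triangle inequality.\<close>

inductive align :: "'a list list \<Rightarrow> 'a list list \<Rightarrow> nat \<Rightarrow> bool" where
  nil: "align [] [] 0"
| ins: "align x z c \<Longrightarrow> align x (w # z) (c + length w)"
| sub: "align x z c \<Longrightarrow> align (a # x) (w # z) (c + ed a w)"

lemma align_insI: "align x z c \<Longrightarrow> d = c + length w \<Longrightarrow> align x (w # z) d"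
  using align.ins by blast

lemma align_subI: "align x z c \<Longrightarrow> d = c + ed a w \<Longrightarrow> align (a # x) (w # z) d"
  using align.sub by blast

lemma align_length_le: "align x z c \<Longrightarrow> length x \<le> length z"
  by (induction rule: align.induct) auto

lemma align_refl: "align x x 0"
  by (induction x) (auto intro: align.nil align_subI)

lemma align_exists: "length x \<le> length z \<Longrightarrow> \<exists>c. align x z c"
proof (induction z arbitrary: x)
  case Nil
  then show ?case by (auto intro: align.nil)
next
  case (Cons w z)
  show ?case
  proof (cases "length x \<le> length z")
    case True
    then show ?thesis using Cons.IH align.ins by blast
  next
    case False
    with Cons.prems obtain a x' where "x = a # x'" "length x' \<le> length z"
      by (cases x) auto
    then show ?thesis using Cons.IH align.sub by blast
  qed
qed

lemma align_insert_at:
  "align x z c \<Longrightarrow> i \<le> length z \<Longrightarrow> align x (take i z @ w # drop i z) (c + length w)"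
proof (induction arbitrary: i rule: align.induct)
  case nil
  then show ?case using align.ins[OF align.nil] by simp
next
  case (ins x z c w')
  show ?case
  proof (cases i)
    case 0
    then show ?thesis using align.ins[OF align.ins[OF ins.hyps]] by simp
  next
    case (Suc j)
    then show ?thesis using ins by (auto intro!: align_insI)
  qed
next
  case (sub x z c a w')
  show ?case
  proof (cases i)
    case 0
    then show ?thesis using align.ins[OF align.sub[OF sub.hyps]] by simp
  next
    case (Suc j)
    then show ?thesis using sub by (auto intro!: align_subI)
  qed
qed

lemma align_update:
  "align x z c \<Longrightarrow> i < length z \<Longrightarrow> \<exists>c' \<le> c + ed (z ! i) w. align x (z[i := w]) c'"
proof (induction arbitrary: i rule: align.induct)
  case nil
  then show ?case by simp
next
  case (ins x z c w')
  show ?case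
  proof (cases i)
    case 0
    have "length w \<le> length w' + ed w' w"
      using length_le_ed_add_length[of w w'] ed_commute[of w w'] by simp
    then show ?thesis
      using 0 align.ins[OF ins.hyps, of w] by (intro exI[of _ "c + length w"]) auto
  next
    case (Suc j)
    with ins obtain c' where "c' \<le> c + ed (z ! j) w" "align x (z[j := w]) c'"
      by auto
    then show ?thesis
      using Suc by (intro exI[of _ "c' + length w'"]) (auto intro: align_insI)
  qed
next
  case (sub x z c a w')
  show ?case
  proof (cases i)
    case 0
    have "ed a w \<le> ed a w' + ed w' w"
      by (rule ed_triangle)
    then show ?thesis
      using 0 align.sub[OF sub.hyps, of a w] by (intro exI[of _ "c + ed a w"]) auto
  next
    case (Suc j)
    with sub obtain c' where "c' \<le> c + ed (z ! j) w" "align x (z[j := w]) c'"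
      by auto
    then show ?thesis
      using Suc by (intro exI[of _ "c' + ed a w'"]) (auto intro: align_subI)
  qed
qed

lemma aed_reach_imp_align: "aed_reach x z c \<Longrightarrow> \<exists>c' \<le> c. align x z c'"
proof (induction rule: aed_reach.induct)
  case (refl x)
  then show ?case using align_refl by blast
next
  case (ins x z c i w)
  then obtain c' where "c' \<le> c" "align x z c'"
    by blast
  then show ?case
    using align_insert_at[of x z c' i w] ins.hyps(2) by (intro exI[of _ "c' + length w"]) auto
next
  case (subst x z c i w)
  then obtain c' where "c' \<le> c" "align x z c'"
    by blast
  then obtain c'' where "c'' \<le> c' + ed (z ! i) w" "align x (z[i := w]) c''"
    using align_update subst.hyps(2) by blast
  then show ?case
    using \<open>c' \<le> c\<close> by (intro exI[of _ c'']) auto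
qed

lemma aed_reach_Cons: "aed_reach x z c \<Longrightarrow> aed_reach (a # x) (a # z) c"
proof (induction rule: aed_reach.induct)
  case (refl x)
  then show ?case by (rule aed_reach.refl)
next
  case (ins x z c i w)
  then show ?case using aed_reach.ins[OF ins.IH, of "Suc i" w] by simp
next
  case (subst x z c i w)
  then show ?case using aed_reach.subst[OF subst.IH, of "Suc i" w] by simp
qed

lemma align_imp_aed_reach: "align x z c \<Longrightarrow> aed_reach x z c"
proof (induction rule: align.induct)
  case nil
  then show ?case by (rule aed_reach.refl)
next
  case (ins x z c w)
  then show ?case using aed_reach.ins[OF ins.IH, of 0 w] by simp
next
  case (sub x z c a w)
  then show ?case using aed_reach.subst[OF aed_reach_Cons[OF sub.IH], where i = 0 and w = w] by simp
qed

lemma aed_le_align: "align x z c \<Longrightarrow> aed x z \<le> c"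
  unfolding aed_def by (rule Least_le) (rule align_imp_aed_reach)

lemma align_aed:
  assumes "length x \<le> length z"
  shows "align x z (aed x z)"
proof -
  obtain c where "align x z c"
    using align_exists[OF assms] by blast
  then have "aed_reach x z (aed x z)"
    unfolding aed_def by (rule LeastI[OF align_imp_aed_reach])
  then obtain c' where "c' \<le> aed x z" "align x z c'"
    using aed_reach_imp_align by blast
  then show ?thesis
    using aed_le_align[of x z c'] by (simp add: le_antisym)
qed

lemma aed_self [simp]: "aed x x = 0"
  using aed_le_align[OF align_refl] by simp

lemma aed_Cons_right_le: "length x \<le> length z \<Longrightarrow> aed x (w # z) \<le> aed x z + length w"
  by (rule aed_le_align) (rule align.ins[OF align_aed])

lemma aed_Cons_Cons_le: "length x \<le> length z \<Longrightarrow> aed (a # x) (w # z) \<le> aed x z + ed a w"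
  by (rule aed_le_align) (rule align.sub[OF align_aed])

section \<open>Edit distance with give-up\<close>

lemma edg_Nil2 [simp]: "edg lam xs [] = lam * real (length xs)"
  by (cases xs) auto

lemma edg_Nil1 [simp]: "edg lam [] ys = lam * real (length ys)"
  by (cases ys) auto

lemma edg_le_giveup: "edg lam xs ys \<le> lam * real (length xs) + lam * real (length ys)"
  by (cases xs; cases ys) auto

lemma edg_le_deletion: "edg lam (a # xs) ys \<le> edg lam xs ys + lam + real (length a)"
  by (cases ys) (auto simp: algebra_simps)

lemma edg_le_insertion: "edg lam xs (b # ys) \<le> edg lam xs ys + lam + real (length b)"
  by (cases xs) (auto simp: algebra_simps)

lemma edg_le_substitution: "edg lam (a # xs) (b # ys) \<le> edg lam xs ys + lam + real (ed a b)"
  by simp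

lemma edg_Cons_Cons_cases:
  obtains "edg lam (a # xs) (b # ys) = edg lam xs ys + lam + real (ed a b)"
  | "edg lam (a # xs) (b # ys) = edg lam (a # xs) ys + lam + real (ed [] b)"
  | "edg lam (a # xs) (b # ys) = edg lam xs (b # ys) + lam + real (ed a [])"
  | "edg lam (a # xs) (b # ys) = lam * real (length (a # xs)) + lam * real (length (b # ys))"
  by (simp only: edg.simps(4)) linarith

lemma edg_le_align_common_prefix:
  assumes "lam \<ge> 0" "align x (C @ P) c1" "align y (C @ Q) c2"
  shows "edg lam x y \<le> real c1 + real c2 + lam * real (length C + length P + length Q)"
  using assms(2,3)
proof (induction C arbitrary: x y c1 c2)
  case Nil
  have "edg lam x y \<le> lam * real (length x) + lam * real (length y)"
    by (rule edg_le_giveup)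
  also have "\<dots> \<le> lam * real (length P) + lam * real (length Q)"
    using align_length_le[OF Nil.prems(1)] align_length_le[OF Nil.prems(2)] assms(1)
    by (intro add_mono mult_left_mono) auto
  finally show ?case
    by (simp add: algebra_simps)
next
  case (Cons w C)
  have step: "lam * real (length (w # C) + length P + length Q)
      = lam * real (length C + length P + length Q) + lam"
    by (simp add: algebra_simps)
  have length_le: "length b \<le> ed b w + length w" for b
    by (rule length_le_ed_add_length)
  have triangle: "ed a b \<le> ed a w + ed b w" for a b
    using ed_triangle[of a b w] ed_commute[of b w] by simp
  consider
      (ins_ins) c1' c2' where "align x (C @ P) c1'" "c1 = c1' + length w"
        "align y (C @ Q) c2'" "c2 = c2' + length w"
    | (ins_sub) c1' y' b c2' where "align x (C @ P) c1'" "c1 = c1' + length w"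
        "y = b # y'" "align y' (C @ Q) c2'" "c2 = c2' + ed b w"
    | (sub_ins) x' a c1' c2' where "x = a # x'" "align x' (C @ P) c1'" "c1 = c1' + ed a w"
        "align y (C @ Q) c2'" "c2 = c2' + length w"
    | (sub_sub) x' a c1' y' b c2' where "x = a # x'" "align x' (C @ P) c1'" "c1 = c1' + ed a w"
        "y = b # y'" "align y' (C @ Q) c2'" "c2 = c2' + ed b w"
    using Cons.prems by (elim align.cases[of x] align.cases[of y]) auto
  then show ?case
  proof cases
    case ins_ins
    then show ?thesis
      using Cons.IH[OF ins_ins(1,3)] assms(1) unfolding step by simp
  next
    case ins_sub
    then show ?thesis
      using Cons.IH[OF ins_sub(1,4)] edg_le_insertion[of lam x b y'] length_le[of b]
      unfolding step by simp
  next
    case sub_ins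
    then show ?thesis
      using Cons.IH[OF sub_ins(2,4)] edg_le_deletion[of lam a x' y] length_le[of a]
      unfolding step by simp
  next
    case sub_sub
    then show ?thesis
      using Cons.IH[OF sub_sub(2,5)] edg_le_substitution[of lam a x' b y'] triangle[of a b]
      unfolding step by simp
  qed
qed

section \<open>Root paths in a tree\<close>

declare tree_path.simps [simp del]

function node_path :: "(nat \<times> 'a list) list \<Rightarrow> nat \<Rightarrow> nat list" where
  "node_path ns v =
     (if v = 0 \<or> length ns < v \<or> v \<le> fst (ns ! (v - 1)) then []
      else node_path ns (fst (ns ! (v - 1))) @ [v])"
  by pat_completeness auto
termination by (relation "measure (\<lambda>(ns, v). v)") auto

declare node_path.simps [simp del]

lemma tree_path_eq_map_node_path:
  "tree_path ns v = map (\<lambda>u. snd (ns ! (u - 1))) (node_path ns v)"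
  by (induction ns v rule: node_path.induct) (subst tree_path.simps, subst node_path.simps, auto)

lemma node_path_bounds: "u \<in> set (node_path ns v) \<Longrightarrow> 1 \<le> u \<and> u \<le> v \<and> u \<le> length ns"
  by (induction ns v rule: node_path.induct) (subst (asm) node_path.simps, auto split: if_splits)

lemma distinct_node_path: "distinct (node_path ns v)"
proof (induction ns v rule: node_path.induct)
  case (1 ns v)
  then show ?case
    using node_path_bounds[of v ns "fst (ns ! (v - 1))"] by (subst node_path.simps) auto
qed

lemma prefix_node_path: "u \<in> set (node_path ns v) \<Longrightarrow> prefix (node_path ns u) (node_path ns v)"
proof (induction ns v rule: node_path.induct)
  case (1 ns v)
  show ?case
  proof (cases "v = 0 \<or> length ns < v \<or> v \<le> fst (ns ! (v - 1))")
    case True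
    then show ?thesis using "1.prems" by (subst (asm) node_path.simps) simp
  next
    case False
    then have v: "node_path ns v = node_path ns (fst (ns ! (v - 1))) @ [v]"
      by (subst node_path.simps) simp
    show ?thesis
    proof (cases "u = v")
      case False
      then have "prefix (node_path ns u) (node_path ns (fst (ns ! (v - 1))))"
        using "1.IH" "1.prems" \<open>\<not> (v = 0 \<or> _)\<close> v by simp
      then show ?thesis
        unfolding v by simp
    qed simp
  qed
qed

lemma mem_node_path_self:
  "valid_tree ns \<Longrightarrow> 1 \<le> v \<Longrightarrow> v \<le> length ns \<Longrightarrow> v \<in> set (node_path ns v)"
  unfolding valid_tree_def by (subst node_path.simps) (auto dest!: spec[of _ "v - 1"])

text \<open>A node common to two root paths lies on their longest common prefix, so the two paths
  branch into node-disjoint parts.\<close>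

lemma tree_paths_common_prefix:
  assumes "valid_tree ns"
  obtains C P Q where "tree_path ns u = C @ P" "tree_path ns v = C @ Q"
    "length C + length P + length Q \<le> length ns"
proof -
  define A where "A = node_path ns u"
  define B where "B = node_path ns v"
  define L where "L = longest_common_prefix A B"
  define label where "label = (\<lambda>k. snd (ns ! (k - 1)))"
  obtain A' B' where A: "A = L @ A'" and B: "B = L @ B'"
    using longest_common_prefix_prefix1[of A B] longest_common_prefix_prefix2[of A B]
    unfolding L_def prefix_def by blast
  have common: "s \<in> set L" if "s \<in> set A" "s \<in> set B" for s
  proof -
    have "prefix (node_path ns s) L"
      unfolding L_def using that prefix_node_path longest_common_prefix_max_prefix
      unfolding A_def B_def by blast
    moreover have "s \<in> set (node_path ns s)"
      using that node_path_bounds mem_node_path_self[OF assms] unfolding A_def by blast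
    ultimately show ?thesis
      using set_mono_prefix by blast
  qed
  have "distinct A" "distinct B"
    unfolding A_def B_def by (rule distinct_node_path)+
  then have distinct: "distinct (L @ A' @ B')"
    using common unfolding A B by auto
  have "set A \<union> set B \<subseteq> {1..length ns}"
    using node_path_bounds unfolding A_def B_def by fastforce
  then have "card (set (L @ A' @ B')) \<le> card {1..length ns}"
    unfolding A B by (intro card_mono) auto
  then have "length L + length A' + length B' \<le> length ns"
    using distinct_card[OF distinct] by simp
  moreover have "tree_path ns u = map label L @ map label A'"
    "tree_path ns v = map label L @ map label B'"
    unfolding tree_path_eq_map_node_path label_def[symmetric] A_def[symmetric] B_def[symmetric] A B
    by simp_all
  ultimately show thesis
    using that by simp
qed

lemma edg_le_error:
  assumes "lam \<ge> 0" "summary_tree x y ns vx vy"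
  shows "edg lam x y \<le> error lam x y ns vx vy"
proof -
  have valid: "valid_tree ns" and len: "length x \<le> length (tree_path ns vx)"
      "length y \<le> length (tree_path ns vy)"
    using assms(2) unfolding summary_tree_def by auto
  obtain C P Q where paths: "tree_path ns vx = C @ P" "tree_path ns vy = C @ Q"
      and size: "length C + length P + length Q \<le> length ns"
    by (rule tree_paths_common_prefix[OF valid])
  have "edg lam x y \<le> real (aed x (C @ P)) + real (aed y (C @ Q))
      + lam * real (length C + length P + length Q)"
    using edg_le_align_common_prefix[OF assms(1) align_aed align_aed] len unfolding paths by simp
  also have "\<dots> \<le> real (aed x (C @ P)) + real (aed y (C @ Q)) + lam * real (length ns)"
    using size assms(1) by (simp add: mult_left_mono)
  finally show ?thesis
    unfolding error_def paths .
qed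

section \<open>BuildBifurcation\<close>

lemma tree_path_0 [simp]: "tree_path ns 0 = []"
  by (subst tree_path.simps) simp

lemma length_shift_under [simp]: "length (shift_under s ns) = Suc (length ns)"
  by (simp add: shift_under_def)

lemma valid_tree_shift_under:
  assumes "valid_tree ns"
  shows "valid_tree (shift_under s ns)"
  unfolding valid_tree_def
proof (intro allI impI)
  fix k
  assume k: "k < length (shift_under s ns)"
  show "fst (shift_under s ns ! k) \<le> k"
  proof (cases k)
    case (Suc j)
    then have "fst (ns ! j) \<le> j"
      using k assms unfolding valid_tree_def by simp
    then show ?thesis
      using Suc k by (simp add: shift_under_def case_prod_beta)
  qed (simp add: shift_under_def)
qed

lemma tree_path_shift_under:
  "valid_tree ns \<Longrightarrow> v \<le> length ns \<Longrightarrow> tree_path (shift_under s ns) (Suc v) = s # tree_path ns v"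
proof (induction v rule: less_induct)
  case (less v)
  show ?case
  proof (cases v)
    case 0
    then show ?thesis
      by (subst tree_path.simps) (simp add: shift_under_def)
  next
    case (Suc j)
    obtain p l where nth: "ns ! j = (p, l)"
      by fastforce
    have "p \<le> j"
      using less.prems Suc nth unfolding valid_tree_def by (metis Suc_le_lessD fst_conv)
    have "tree_path (shift_under s ns) (Suc v) = tree_path (shift_under s ns) (Suc p) @ [l]"
      using nth \<open>p \<le> j\<close> Suc less.prems by (subst tree_path.simps) (simp add: shift_under_def)
    also have "\<dots> = s # tree_path ns p @ [l]"
      using less.IH[of p] less.prems \<open>p \<le> j\<close> Suc by simp
    also have "tree_path ns p @ [l] = tree_path ns v"
      using nth \<open>p \<le> j\<close> Suc less.prems by (subst (2) tree_path.simps) simp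
    finally show ?thesis .
  qed
qed

definition giveup_tree :: "'a list list \<Rightarrow> 'a list list \<Rightarrow> (nat \<times> 'a list) list" where
  "giveup_tree xs ys = chain 0 0 xs @ chain 0 (length xs) ys"

lemma length_giveup_tree [simp]: "length (giveup_tree xs ys) = length xs + length ys"
  by (simp add: giveup_tree_def chain_def)

lemma giveup_tree_nth_left:
  "i < length xs \<Longrightarrow> giveup_tree xs ys ! i = (if i = 0 then 0 else i, xs ! i)"
  by (simp add: giveup_tree_def chain_def nth_append)

lemma giveup_tree_nth_right:
  "j < length ys \<Longrightarrow> giveup_tree xs ys ! (length xs + j) = (if j = 0 then 0 else length xs + j, ys ! j)"
  by (simp add: giveup_tree_def chain_def nth_append)

lemma valid_giveup_tree: "valid_tree (giveup_tree xs ys)"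
  unfolding valid_tree_def
proof (intro allI impI)
  fix k
  assume "k < length (giveup_tree xs ys)"
  then consider "k < length xs" | j where "k = length xs + j" "j < length ys"
    by (metis add_less_cancel_left le_add_diff_inverse length_giveup_tree not_le)
  then show "fst (giveup_tree xs ys ! k) \<le> k"
    by cases (simp_all add: giveup_tree_nth_left giveup_tree_nth_right)
qed

lemma tree_path_giveup_tree_left:
  "i < length xs \<Longrightarrow> tree_path (giveup_tree xs ys) (Suc i) = take (Suc i) xs"
  by (induction i)
    (subst tree_path.simps, simp add: giveup_tree_nth_left take_Suc_conv_app_nth)+

lemma tree_path_giveup_tree_right:
  "j < length ys \<Longrightarrow> tree_path (giveup_tree xs ys) (length xs + Suc j) = take (Suc j) ys"
proof (induction j)
  case 0
  then show ?case
    using giveup_tree_nth_right[of 0 ys xs]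
    by (subst tree_path.simps) (simp add: take_Suc_conv_app_nth)
next
  case (Suc j)
  then show ?case
    using giveup_tree_nth_right[of "Suc j" ys xs]
    by (subst tree_path.simps) (simp add: take_Suc_conv_app_nth)
qed

lemma bb_exists: "\<exists>ns vx vy. bb lam x y ns vx vy"
proof (induction "length x + length y" arbitrary: x y rule: less_induct)
  case less
  show ?case
  proof (cases x; cases y)
    assume "x = []" "y = []"
    then show ?thesis using bb.empty by blast
  next
    fix b ys
    assume "x = []" "y = b # ys"
    with less obtain ns vx vy where "bb lam [] ys ns vx vy"
      by fastforce
    with \<open>x = []\<close> \<open>y = b # ys\<close> show ?thesis
      using bb.insertion by blast
  next
    fix a xs
    assume "x = a # xs" "y = []"
    with less obtain ns vx vy where "bb lam xs [] ns vx vy"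
      by fastforce
    with \<open>x = a # xs\<close> \<open>y = []\<close> show ?thesis
      using bb.deletion by blast
  next
    fix a xs b ys
    assume x: "x = a # xs" and y: "y = b # ys"
    show ?thesis
    proof (cases rule: edg_Cons_Cons_cases[of lam a xs b ys])
      case 1
      with less.hyps[of xs ys] show ?thesis
        using bb.substitution x y by fastforce
    next
      case 2
      with less.hyps[of "a # xs" ys] show ?thesis
        using bb.insertion x y by fastforce
    next
      case 3
      with less.hyps[of xs "b # ys"] show ?thesis
        using bb.deletion x y by fastforce
    next
      case 4
      then show ?thesis using bb.giveup[of "a # xs" "b # ys"] x y by blast
    qed
  qed
qed

lemma bb_summary_tree_error_le:
  assumes "bb lam x y ns vx vy"
  shows "summary_tree x y ns vx vy \<and> error lam x y ns vx vy \<le> edg lam x y"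
  using assms unfolding summary_tree_def error_def
proof (induction rule: bb.induct)
  case empty
  then show ?case by (simp add: valid_tree_def)
next
  case (insertion xs ys ns vx vy b)
  let ?P = "tree_path ns vx" and ?Q = "tree_path ns vy"
  have valid: "valid_tree (shift_under b ns)"
    using insertion.IH valid_tree_shift_under by blast
  have Q: "tree_path (shift_under b ns) (Suc vy) = b # ?Q"
    using insertion.IH tree_path_shift_under by auto
  have y: "aed (b # ys) (b # ?Q) \<le> aed ys ?Q"
    using aed_Cons_Cons_le[of ys ?Q b b] insertion.IH by simp
  show ?case
  proof (cases "xs = []")
    case True
    then show ?thesis
      using insertion.IH valid y by (simp add: Q algebra_simps)
  next
    case False
    have P: "tree_path (shift_under b ns) (Suc vx) = b # ?P"
      using insertion.IH tree_path_shift_under by auto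
    have "aed xs (b # ?P) \<le> aed xs ?P + length b"
      using aed_Cons_right_le insertion.IH by blast
    then show ?thesis
      using False insertion.IH insertion.hyps(2) valid y by (simp add: P Q algebra_simps)
  qed
next
  case (deletion xs ys ns vx vy a)
  let ?P = "tree_path ns vx" and ?Q = "tree_path ns vy"
  have valid: "valid_tree (shift_under a ns)"
    using deletion.IH valid_tree_shift_under by blast
  have P: "tree_path (shift_under a ns) (Suc vx) = a # ?P"
    using deletion.IH tree_path_shift_under by auto
  have x: "aed (a # xs) (a # ?P) \<le> aed xs ?P"
    using aed_Cons_Cons_le[of xs ?P a a] deletion.IH by simp
  show ?case
  proof (cases "ys = []")
    case True
    then show ?thesis
      using deletion.IH valid x by (simp add: P algebra_simps)
  next
    case False
    have Q: "tree_path (shift_under a ns) (Suc vy) = a # ?Q"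
      using deletion.IH tree_path_shift_under by auto
    have "aed ys (a # ?Q) \<le> aed ys ?Q + length a"
      using aed_Cons_right_le deletion.IH by blast
    then show ?thesis
      using False deletion.IH deletion.hyps(2) valid x by (simp add: P Q algebra_simps)
  qed
next
  case (substitution xs ys ns vx vy a b)
  let ?P = "tree_path ns vx" and ?Q = "tree_path ns vy"
  have P: "tree_path (shift_under a ns) (Suc vx) = a # ?P"
    and Q: "tree_path (shift_under a ns) (Suc vy) = a # ?Q"
    using substitution.IH tree_path_shift_under by auto
  have "aed (a # xs) (a # ?P) \<le> aed xs ?P"
    using aed_Cons_Cons_le[of xs ?P a a] substitution.IH by simp
  moreover have "aed (b # ys) (a # ?Q) \<le> aed ys ?Q + ed a b"
    using aed_Cons_Cons_le[of ys ?Q b a] substitution.IH ed_commute[of a b] by simp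
  ultimately show ?case
    using substitution.IH unfolding substitution.hyps(2)
    by (auto simp: P Q valid_tree_shift_under distrib_left)
next
  case (giveup xs ys)
  have "tree_path (giveup_tree xs ys) (length xs) = xs"
    using tree_path_giveup_tree_left[of "length xs - 1" xs ys] giveup.hyps(1) by simp
  moreover have "tree_path (giveup_tree xs ys) (length xs + length ys) = ys"
    using tree_path_giveup_tree_right[of "length ys - 1" ys xs] giveup.hyps(2) by simp
  ultimately show ?case
    using valid_giveup_tree giveup.hyps(3) by (simp add: giveup_tree_def[symmetric] algebra_simps)
qed

theorem theorem4:
  fixes x y :: "'a::finite list list" and lam :: real
  assumes "lam \<ge> 0"
  shows "(\<forall>ns vx vy. summary_tree x y ns vx vy \<longrightarrow> edg lam x y \<le> error lam x y ns vx vy)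
       \<and> (\<exists>ns vx vy. bb lam x y ns vx vy)
       \<and> (\<forall>ns vx vy. bb lam x y ns vx vy \<longrightarrow>
            summary_tree x y ns vx vy \<and> error lam x y ns vx vy = edg lam x y)"
proof (intro conjI allI impI)
  fix ns vx vy
  assume "summary_tree x y ns vx vy"
  then show "edg lam x y \<le> error lam x y ns vx vy"
    by (rule edg_le_error[OF assms])
next
  show "\<exists>ns vx vy. bb lam x y ns vx vy"
    by (rule bb_exists)
next
  fix ns vx vy
  assume "bb lam x y ns vx vy"
  then have tree: "summary_tree x y ns vx vy" and le: "error lam x y ns vx vy \<le> edg lam x y"
    using bb_summary_tree_error_le by blast+
  show "summary_tree x y ns vx vy"
    by (rule tree)
  show "error lam x y ns vx vy = edg lam x y"
    using le edg_le_error[OF assms tree] by linarith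
qed

end
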